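(* Let $V$ be a finite nonempty set and $f:\{0,1\}^V\to\{0,1\}^V$. (1) $f$ is positive-circular if and only if $f$ is an even-self-dual and-net. (2) $f$ is negative-circular if and only if $f$ is an odd-self-dual and-net.
   Context: For $x,y\in\{0,1\}^V$, $x\oplus y$ is componentwise addition mod 2, $1$ is the all-ones point, $\|x\|$ the number of $1$s; $x$ is even (odd) if $\|x\|$ is. The conjugate is $\tilde f(x)=f(x)\oplus x$. $f$ is self-dual if $f(x\oplus1)=f(x)\oplus1$ for all $x$; even (odd) if $\tilde f(\{0,1\}^V)$ is exactly the set of even (odd) points; even-self-dual (odd-self-dual) if both even (odd) and self-dual. For $x^{j\alpha}$ the point equal to $x$ except its $j$-component is $\alpha$, the global interaction graph $G(f)$ is the signed digraph on $V$ with a positive (resp. negative) arc from $j$ to $i$ iff $f_i(x^{j1})-f_i(x^{j0})=1$ (resp. $=-1$) for at least one $x$. $G(f)$ is simple if there is at most one arc from $j$ to $i$ for all $i,j$. $f$ is an and-net if $G(f)$ is simple and for every $i\in V$ and $x$: $f_i(x)=1$ iff $G(f)$ has no positive arc $j\to i$ with $x_j=0$ and no negative arc $j\to i$ with $x_j=1$. A cycle is a subgraph with at most one arc between any ordered pair whose underlying unsigned digraph is a directed cycle; positive (negative) if it has an even (odd) number of negative arcs. $f$ is positive-circular (negative-circular) if $G(f)$ itself is a positive (negative) cycle through all vertices of $V$. *)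

theory Defs
  imports Main
begin

text \<open>Points of {0,1}^V are Boolean functions on a finite (hence nonempty) type 'v;
  True encodes 1 and False encodes 0.\<close>

definition xorp :: "('v \<Rightarrow> bool) \<Rightarrow> ('v \<Rightarrow> bool) \<Rightarrow> ('v \<Rightarrow> bool)" where
  "xorp x y = (\<lambda>i. x i \<noteq> y i)"

definition onep :: "'v \<Rightarrow> bool" where
  "onep = (\<lambda>_. True)"

definition weight :: "('v::finite \<Rightarrow> bool) \<Rightarrow> nat" where
  "weight x = card {i. x i}"

definition even_point :: "('v::finite \<Rightarrow> bool) \<Rightarrow> bool" where
  "even_point x \<longleftrightarrow> even (weight x)"

definition odd_point :: "('v::finite \<Rightarrow> bool) \<Rightarrow> bool" where
  "odd_point x \<longleftrightarrow> odd (weight x)"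

definition conjugate :: "(('v \<Rightarrow> bool) \<Rightarrow> ('v \<Rightarrow> bool)) \<Rightarrow> ('v \<Rightarrow> bool) \<Rightarrow> ('v \<Rightarrow> bool)" where
  "conjugate f x = xorp (f x) x"

definition self_dual :: "(('v \<Rightarrow> bool) \<Rightarrow> ('v \<Rightarrow> bool)) \<Rightarrow> bool" where
  "self_dual f \<longleftrightarrow> (\<forall>x. f (xorp x onep) = xorp (f x) onep)"

definition even_net :: "(('v::finite \<Rightarrow> bool) \<Rightarrow> ('v \<Rightarrow> bool)) \<Rightarrow> bool" where
  "even_net f \<longleftrightarrow> range (conjugate f) = {x. even_point x}"

definition odd_net :: "(('v::finite \<Rightarrow> bool) \<Rightarrow> ('v \<Rightarrow> bool)) \<Rightarrow> bool" where
  "odd_net f \<longleftrightarrow> range (conjugate f) = {x. odd_point x}"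

definition even_self_dual :: "(('v::finite \<Rightarrow> bool) \<Rightarrow> ('v \<Rightarrow> bool)) \<Rightarrow> bool" where
  "even_self_dual f \<longleftrightarrow> even_net f \<and> self_dual f"

definition odd_self_dual :: "(('v::finite \<Rightarrow> bool) \<Rightarrow> ('v \<Rightarrow> bool)) \<Rightarrow> bool" where
  "odd_self_dual f \<longleftrightarrow> odd_net f \<and> self_dual f"

text \<open>Arcs of the global interaction graph G(f): f_i(x^{j1}) - f_i(x^{j0}) = 1 (positive)
  or = -1 (negative) for some x.\<close>

definition pos_arc :: "(('v \<Rightarrow> bool) \<Rightarrow> ('v \<Rightarrow> bool)) \<Rightarrow> 'v \<Rightarrow> 'v \<Rightarrow> bool" where
  "pos_arc f j i \<longleftrightarrow> (\<exists>x. f (x(j := True)) i \<and> \<not> f (x(j := False)) i)"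

definition neg_arc :: "(('v \<Rightarrow> bool) \<Rightarrow> ('v \<Rightarrow> bool)) \<Rightarrow> 'v \<Rightarrow> 'v \<Rightarrow> bool" where
  "neg_arc f j i \<longleftrightarrow> (\<exists>x. \<not> f (x(j := True)) i \<and> f (x(j := False)) i)"

definition has_arc :: "(('v \<Rightarrow> bool) \<Rightarrow> ('v \<Rightarrow> bool)) \<Rightarrow> 'v \<Rightarrow> 'v \<Rightarrow> bool" where
  "has_arc f j i \<longleftrightarrow> pos_arc f j i \<or> neg_arc f j i"

definition simple_graph :: "(('v \<Rightarrow> bool) \<Rightarrow> ('v \<Rightarrow> bool)) \<Rightarrow> bool" where
  "simple_graph f \<longleftrightarrow> (\<forall>i j. \<not> (pos_arc f j i \<and> neg_arc f j i))"

definition and_net :: "(('v \<Rightarrow> bool) \<Rightarrow> ('v \<Rightarrow> bool)) \<Rightarrow> bool" where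
  "and_net f \<longleftrightarrow> simple_graph f \<and>
     (\<forall>i x. f x i \<longleftrightarrow>
        (\<not> (\<exists>j. pos_arc f j i \<and> \<not> x j)) \<and> (\<not> (\<exists>j. neg_arc f j i \<and> x j)))"

text \<open>G(f) is a cycle through all vertices: simple, and its underlying unsigned digraph is
  a directed Hamiltonian cycle, i.e. the arcs are exactly j \<rightarrow> s j for a successor map s
  with a single orbit covering all vertices.\<close>

definition hamiltonian_cycle_succ :: "(('v \<Rightarrow> bool) \<Rightarrow> ('v \<Rightarrow> bool)) \<Rightarrow> ('v \<Rightarrow> 'v) \<Rightarrow> bool" where
  "hamiltonian_cycle_succ f s \<longleftrightarrow>
     simple_graph f \<and> (\<forall>i j. has_arc f j i \<longleftrightarrow> i = s j) \<and> (\<forall>i j. \<exists>n. (s ^^ n) i = j)"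

definition positive_circular :: "(('v::finite \<Rightarrow> bool) \<Rightarrow> ('v \<Rightarrow> bool)) \<Rightarrow> bool" where
  "positive_circular f \<longleftrightarrow>
     (\<exists>s. hamiltonian_cycle_succ f s \<and> even (card {j. neg_arc f j (s j)}))"

definition negative_circular :: "(('v::finite \<Rightarrow> bool) \<Rightarrow> ('v \<Rightarrow> bool)) \<Rightarrow> bool" where
  "negative_circular f \<longleftrightarrow>
     (\<exists>s. hamiltonian_cycle_succ f s \<and> odd (card {j. neg_arc f j (s j)}))"

end

theory Submission
  imports Defs
begin

text \<open>
  In both directions \<open>f\<close> is a literal net: for a permutation \<open>s\<close> of \<open>V\<close>, each
  \<open>f\<^bsub>s j\<^esub>(x)\<close> is \<open>x\<^sub>j\<close> or \<open>\<not> x\<^sub>j\<close>.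
  For a Hamiltonian cycle \<open>s\<close> this holds because \<open>j\<close> is the only in-neighbour of \<open>s j\<close>;
  for a self-dual and-net because every vertex has exactly one in-arc (with none, \<open>f\<^sub>i\<close>
  would be constantly 1; with two, \<open>f\<^sub>i\<close> could be made to vanish both at a point and at
  its complement).

  In a literal net, reindexing along \<open>s\<close> shows that on every \<open>s\<close>-invariant set \<open>C\<close>
  the conjugate has the parity of the number of negative arcs into \<open>C\<close>. For \<open>C = V\<close> this
  puts the image of the conjugate inside one parity class; when \<open>s\<close> is a single cycle the
  conjugate identifies only complementary points, so by counting its image is the whole class.
  Conversely, if the image is a whole parity class, there is no proper nonempty \<open>s\<close>-invariant
  set \<open>C\<close>: flipping one coordinate inside or one outside \<open>C\<close> gives points of the same
  class with different parities on \<open>C\<close>.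
\<close>

lemma odd_card_Collect_neq:
  assumes "finite A"
  shows "odd (card {j\<in>A. P j \<noteq> Q j}) \<longleftrightarrow> (odd (card {j\<in>A. P j}) \<noteq> odd (card {j\<in>A. Q j}))"
  using assms
proof (induction A rule: finite_induct)
  case (insert a A)
  have "{j\<in>insert a A. R j} = (if R a then insert a {j\<in>A. R j} else {j\<in>A. R j})" for R
    by auto
  with insert show ?case
    by (cases "P a"; cases "Q a") simp_all
qed simp

lemma odd_weight_xorp: "odd (weight (xorp x y)) \<longleftrightarrow> (odd (weight x) \<noteq> odd (weight y))"
  using odd_card_Collect_neq[of UNIV x y] by (simp add: weight_def xorp_def)

lemma weight_single: "weight (\<lambda>k. k = i) = 1"
  by (simp add: weight_def)

lemma xorp_onep: "xorp x onep = (\<lambda>i. \<not> x i)"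
  by (simp add: xorp_def onep_def)

lemma card_parity_class:
  "2 * card {z :: 'v::finite \<Rightarrow> bool. odd (weight z) = q} = card (UNIV :: ('v \<Rightarrow> bool) set)"
proof -
  define E where "E = {z :: 'v \<Rightarrow> bool. odd (weight z) = q}"
  define flip where "flip z = xorp z (\<lambda>k. k = undefined)" for z :: "'v \<Rightarrow> bool"
  have "odd (weight (flip z)) \<longleftrightarrow> \<not> odd (weight z)" for z
    by (simp add: flip_def odd_weight_xorp weight_single)
  moreover have "flip (flip z) = z" for z
    by (auto simp: flip_def xorp_def)
  ultimately have "bij_betw flip E (-E)"
    unfolding E_def by (intro bij_betw_byWitness[where f' = flip]) auto
  then have "card (-E) = card E"
    by (simp add: bij_betw_same_card)
  moreover have "card E + card (-E) = card (UNIV :: ('v \<Rightarrow> bool) set)"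
    using card_Un_disjoint[of E "-E"] by (simp add: Compl_partition)
  ultimately show ?thesis
    unfolding E_def by simp
qed

lemma card_UNIV_le_twice_card_range:
  fixes g :: "('v::finite \<Rightarrow> bool) \<Rightarrow> 'w"
  assumes "\<And>x y. g x = g y \<Longrightarrow> y = x \<or> y = (\<lambda>j. \<not> x j)"
  shows "card (UNIV :: ('v \<Rightarrow> bool) set) \<le> 2 * card (range g)"
proof -
  have "(\<Union>y\<in>range g. g -` {y}) = UNIV"
    by blast
  then have "card (UNIV :: ('v \<Rightarrow> bool) set) = card (\<Union>y\<in>range g. g -` {y})"
    by simp
  also have "\<dots> \<le> (\<Sum>y\<in>range g. card (g -` {y}))"
    by (rule card_UN_le) simp
  also have "\<dots> \<le> of_nat (card (range g)) * 2"
  proof (rule sum_bounded_above)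
    fix y assume "y \<in> range g"
    then obtain x where "y = g x" by blast
    with assms have "g -` {y} \<subseteq> {x, \<lambda>j. \<not> x j}" by auto
    then have "card (g -` {y}) \<le> card {x, \<lambda>j. \<not> x j}" by (rule card_mono[rotated]) simp
    also have "\<dots> \<le> 2" by (simp add: card_insert_if)
    finally show "card (g -` {y}) \<le> 2" .
  qed
  finally show ?thesis by simp
qed

lemma range_eq_parity_class:
  fixes g :: "('v::finite \<Rightarrow> bool) \<Rightarrow> ('v \<Rightarrow> bool)"
  assumes "range g \<subseteq> {z. odd (weight z) = q}"
    and "\<And>x y. g x = g y \<Longrightarrow> y = x \<or> y = (\<lambda>j. \<not> x j)"
  shows "range g = {z. odd (weight z) = q}"
proof (rule card_seteq)
  show "card {z :: 'v \<Rightarrow> bool. odd (weight z) = q} \<le> card (range g)"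
  proof -
    have "card (UNIV :: ('v \<Rightarrow> bool) set) \<le> 2 * card (range g)"
      by (rule card_UNIV_le_twice_card_range) (rule assms(2))
    then show ?thesis using card_parity_class[where 'v = 'v, of q] by linarith
  qed
qed (use assms(1) in simp_all)

lemma card_Collect_comp_eq:
  assumes "inj_on s C" and "s ` C = C"
  shows "card {j\<in>C. P (s j)} = card {k\<in>C. P k}"
proof -
  have "s ` {j\<in>C. P (s j)} = {k\<in>C. P k}"
  proof
    show "s ` {j\<in>C. P (s j)} \<subseteq> {k\<in>C. P k}"
      using assms(2) by auto
    show "{k\<in>C. P k} \<subseteq> s ` {j\<in>C. P (s j)}"
    proof
      fix k assume k: "k \<in> {k\<in>C. P k}"
      with assms(2) obtain j where "j \<in> C" "k = s j"
        by blast
      with k show "k \<in> s ` {j\<in>C. P (s j)}"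
        by blast
    qed
  qed
  moreover have "inj_on s {j\<in>C. P (s j)}"
    using assms(1) by (rule inj_on_subset) blast
  ultimately show ?thesis
    by (metis card_image)
qed

lemma component_update_eq_if_no_arc:
  assumes "\<not> has_arc f k i"
  shows "f (x(k := a)) i = f (x(k := c)) i"
  using assms unfolding has_arc_def pos_arc_def neg_arc_def by (cases a; cases c) auto

lemma component_eq_if_agree_on_in_arcs:
  fixes f :: "('v::finite \<Rightarrow> bool) \<Rightarrow> ('v \<Rightarrow> bool)"
  assumes "\<And>k. has_arc f k i \<Longrightarrow> x k = y k"
  shows "f x i = f y i"
proof -
  have "finite D \<Longrightarrow> {k. x k \<noteq> y k} = D \<Longrightarrow> (\<And>k. has_arc f k i \<Longrightarrow> x k = y k) \<Longrightarrow>
      f x i = f y i" for D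
  proof (induction D arbitrary: x rule: finite_induct)
    case empty
    then have "x = y" by auto
    then show ?case by simp
  next
    case (insert d D)
    then have "\<not> has_arc f d i" by auto
    then have "f x i = f (x(d := y d)) i"
      using component_update_eq_if_no_arc[of f d i x "x d" "y d"] by simp
    also have "\<dots> = f y i"
      using insert by (intro insert.IH) auto
    finally show ?case .
  qed
  from this[OF finite refl] show ?thesis
    using assms by blast
qed

lemma component_eq_literal_if_unique_in_arc:
  fixes f :: "('v::finite \<Rightarrow> bool) \<Rightarrow> ('v \<Rightarrow> bool)"
  assumes "\<And>k. has_arc f k i \<longleftrightarrow> k = j"
  shows "f x i = (x j = pos_arc f j i)"
proof -
  have dep: "f y i = f (z(j := y j)) i" for y z
    by (rule component_eq_if_agree_on_in_arcs[of f i y "z(j := y j)"]) (simp add: assms)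
  from assms have "pos_arc f j i \<or> neg_arc f j i"
    unfolding has_arc_def by blast
  then show ?thesis
  proof
    assume pos: "pos_arc f j i"
    then obtain z where "f (z(j := True)) i" "\<not> f (z(j := False)) i"
      unfolding pos_arc_def by blast
    with pos show ?thesis using dep[of x z] by (cases "x j") auto
  next
    assume "neg_arc f j i"
    then obtain z where "\<not> f (z(j := True)) i" "f (z(j := False)) i"
      unfolding neg_arc_def by blast
    then have neg: "f y i = (\<not> y j)" for y using dep[of y z] by (cases "y j") auto
    then have "\<not> pos_arc f j i" unfolding pos_arc_def by simp
    then show ?thesis using neg[of x] by simp
  qed
qed

lemma bij_if_orbit_covers:
  fixes s :: "'v::finite \<Rightarrow> 'v"
  assumes "\<And>i j. \<exists>n. (s ^^ n) i = j"
  shows "bij s"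
proof -
  have "i \<in> range s" for i
  proof -
    obtain n where "(s ^^ n) (s i) = i" using assms by blast
    then have "s ((s ^^ n) i) = i" by (simp add: funpow_swap1)
    then show ?thesis by (metis rangeI)
  qed
  then have "surj s" by blast
  then show ?thesis using finite_UNIV_surj_inj[of s] by (simp add: bij_def)
qed

lemma image_orbit_eq:
  fixes s :: "'v::finite \<Rightarrow> 'v"
  assumes "inj s"
  shows "s ` range (\<lambda>n. (s ^^ n) i) = range (\<lambda>n. (s ^^ n) i)"
proof (rule endo_inj_surj)
  show "s ` range (\<lambda>n. (s ^^ n) i) \<subseteq> range (\<lambda>n. (s ^^ n) i)"
    by (auto intro: range_eqI[where x = "Suc _"])
qed (use assms in \<open>auto intro: inj_on_subset\<close>)

definition literal_net :: "(('v \<Rightarrow> bool) \<Rightarrow> ('v \<Rightarrow> bool)) \<Rightarrow> ('v \<Rightarrow> 'v) \<Rightarrow> ('v \<Rightarrow> bool) \<Rightarrow> bool"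
  where "literal_net f s b \<longleftrightarrow> bij s \<and> (\<forall>x j. f x (s j) = (x j = b j))"

context
  fixes f :: "('v \<Rightarrow> bool) \<Rightarrow> ('v \<Rightarrow> bool)" and s :: "'v \<Rightarrow> 'v" and b :: "'v \<Rightarrow> bool"
  assumes lit: "literal_net f s b"
begin

private lemma succ_bij: "bij s"
  using lit by (simp add: literal_net_def)

private lemma literal_apply: "f x (s j) = (x j = b j)"
  using lit by (simp add: literal_net_def)

private lemma succ_eq_iff: "s k = s j \<longleftrightarrow> k = j"
  using succ_bij by (simp add: bij_def inj_eq)

private lemma obtain_succ: obtains j where "i = s j"
  using succ_bij by (metis bij_def surj_def)

lemma literal_net_pos_arc_iff: "pos_arc f k i \<longleftrightarrow> i = s k \<and> b k"
proof -
  obtain j where "i = s j" by (rule obtain_succ)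
  moreover have "pos_arc f k (s j) \<longleftrightarrow> k = j \<and> b k"
    unfolding pos_arc_def literal_apply by (cases "k = j") auto
  ultimately show ?thesis by (auto simp: succ_eq_iff)
qed

lemma literal_net_neg_arc_iff: "neg_arc f k i \<longleftrightarrow> i = s k \<and> \<not> b k"
proof -
  obtain j where "i = s j" by (rule obtain_succ)
  moreover have "neg_arc f k (s j) \<longleftrightarrow> k = j \<and> \<not> b k"
    unfolding neg_arc_def literal_apply by (cases "k = j") auto
  ultimately show ?thesis by (auto simp: succ_eq_iff)
qed

lemma literal_net_has_arc_iff: "has_arc f k i \<longleftrightarrow> i = s k"
  unfolding has_arc_def literal_net_pos_arc_iff literal_net_neg_arc_iff by auto

lemma literal_net_simple_graph: "simple_graph f"
  unfolding simple_graph_def literal_net_pos_arc_iff literal_net_neg_arc_iff by auto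

lemma literal_net_and_net: "and_net f"
proof -
  have "f x i \<longleftrightarrow> \<not> (\<exists>j. pos_arc f j i \<and> \<not> x j) \<and> \<not> (\<exists>j. neg_arc f j i \<and> x j)" for x i
  proof -
    obtain k where "i = s k" by (rule obtain_succ)
    then show ?thesis
      unfolding literal_net_pos_arc_iff literal_net_neg_arc_iff by (auto simp: literal_apply succ_eq_iff)
  qed
  then show ?thesis
    unfolding and_net_def by (simp add: literal_net_simple_graph)
qed

lemma literal_net_self_dual: "self_dual f"
proof -
  have "f (\<lambda>l. \<not> x l) i = (\<not> f x i)" for x i
  proof -
    obtain k where "i = s k" by (rule obtain_succ)
    then show ?thesis by (auto simp: literal_apply)
  qed
  then show ?thesis
    unfolding self_dual_def xorp_onep by blast
qed

lemma literal_net_odd_card_conjugate_on: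
  assumes "finite C" and "s ` C = C"
  shows "odd (card {k\<in>C. conjugate f x k}) \<longleftrightarrow> odd (card {j\<in>C. \<not> b j})"
proof -
  have reindex: "card {j\<in>C. P (s j)} = card {k\<in>C. P k}" for P
    by (rule card_Collect_comp_eq[OF inj_on_subset[OF bij_is_inj[OF succ_bij] subset_UNIV] assms(2)])
  have "conjugate f x (s j) = ((x j \<noteq> (\<not> b j)) \<noteq> x (s j))" for j
    unfolding conjugate_def xorp_def literal_apply by blast
  then have "card {k\<in>C. conjugate f x k} = card {j\<in>C. (x j \<noteq> (\<not> b j)) \<noteq> x (s j)}"
    using reindex[of "conjugate f x"] by simp
  also have "odd \<dots> \<longleftrightarrow> (odd (card {j\<in>C. x j \<noteq> (\<not> b j)}) \<noteq> odd (card {j\<in>C. x (s j)}))"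
    by (rule odd_card_Collect_neq[OF assms(1)])
  also have "\<dots> \<longleftrightarrow> ((odd (card {j\<in>C. x j}) \<noteq> odd (card {j\<in>C. \<not> b j})) \<noteq> odd (card {j\<in>C. x j}))"
    unfolding odd_card_Collect_neq[OF assms(1)] reindex[of x] ..
  finally show ?thesis
    by blast
qed

lemma literal_net_conjugate_eq_imp:
  assumes orbit: "\<And>i j. \<exists>n. (s ^^ n) i = j"
    and eq: "conjugate f x = conjugate f y"
  shows "y = x \<or> y = (\<lambda>j. \<not> x j)"
proof -
  have step: "(x (s j) = y (s j)) = (x j = y j)" for j
    using fun_cong[OF eq, of "s j"] unfolding conjugate_def xorp_def literal_apply by blast
  have "(x ((s ^^ n) i) = y ((s ^^ n) i)) = (x i = y i)" for n i
    by (induction n) (auto simp: step)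
  then have "(x j = y j) = (x i = y i)" for i j
    using orbit by metis
  then show ?thesis by blast
qed

end

lemma literal_net_odd_weight_conjugate:
  fixes f :: "('v::finite \<Rightarrow> bool) \<Rightarrow> ('v \<Rightarrow> bool)"
  assumes "literal_net f s b"
  shows "odd (weight (conjugate f x)) \<longleftrightarrow> odd (card {j. \<not> b j})"
  using literal_net_odd_card_conjugate_on[OF assms, of UNIV x] assms
  by (simp add: weight_def literal_net_def bij_def)

lemma hamiltonian_cycle_succ_imp_literal_net:
  fixes f :: "('v::finite \<Rightarrow> bool) \<Rightarrow> ('v \<Rightarrow> bool)"
  assumes "hamiltonian_cycle_succ f s"
  shows "literal_net f s (\<lambda>j. pos_arc f j (s j))"
proof -
  have bij: "bij s"
    using assms bij_if_orbit_covers unfolding hamiltonian_cycle_succ_def by blast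
  have "has_arc f k (s j) \<longleftrightarrow> k = j" for k j
    using assms bij unfolding hamiltonian_cycle_succ_def by (auto simp: bij_def inj_eq)
  then have "f x (s j) = (x j = pos_arc f j (s j))" for x j
    by (rule component_eq_literal_if_unique_in_arc)
  with bij show ?thesis
    unfolding literal_net_def by blast
qed

lemma hamiltonian_cycle_succ_imp_self_dual_and_net:
  fixes f :: "('v::finite \<Rightarrow> bool) \<Rightarrow> ('v \<Rightarrow> bool)"
  assumes ham: "hamiltonian_cycle_succ f s"
  shows "self_dual f \<and> and_net f \<and>
    range (conjugate f) = {z. odd (weight z) = odd (card {j. neg_arc f j (s j)})}"
proof -
  define b where "b j = pos_arc f j (s j)" for j
  have lit: "literal_net f s b"
    unfolding b_def using ham by (rule hamiltonian_cycle_succ_imp_literal_net)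
  have "{j. neg_arc f j (s j)} = {j. \<not> b j}"
    using literal_net_neg_arc_iff[OF lit] by blast
  moreover have "range (conjugate f) = {z. odd (weight z) = odd (card {j. \<not> b j})}"
  proof (rule range_eq_parity_class)
    show "range (conjugate f) \<subseteq> {z. odd (weight z) = odd (card {j. \<not> b j})}"
      using literal_net_odd_weight_conjugate[OF lit] by auto
    show "\<And>x y. conjugate f x = conjugate f y \<Longrightarrow> y = x \<or> y = (\<lambda>j. \<not> x j)"
      using ham literal_net_conjugate_eq_imp[OF lit] unfolding hamiltonian_cycle_succ_def by blast
  qed
  ultimately show ?thesis
    using literal_net_self_dual[OF lit] literal_net_and_net[OF lit] by simp
qed

lemma and_net_apply:
  assumes "and_net f"
  shows "f x i \<longleftrightarrow> (\<forall>j. pos_arc f j i \<longrightarrow> x j) \<and> (\<forall>j. neg_arc f j i \<longrightarrow> \<not> x j)"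
  using assms unfolding and_net_def by auto

lemma self_dual_apply:
  assumes "self_dual f"
  shows "f (\<lambda>l. \<not> x l) i = (\<not> f x i)"
  using assms unfolding self_dual_def xorp_onep by simp

lemma self_dual_and_net_ex_in_arc:
  assumes "and_net f" "self_dual f"
  shows "\<exists>j. has_arc f j i"
proof (rule ccontr)
  assume "\<nexists>j. has_arc f j i"
  then have "f x i" for x
    using and_net_apply[OF assms(1)] unfolding has_arc_def by blast
  then show False
    using self_dual_apply[OF assms(2), of "\<lambda>_. True" i] by simp
qed

lemma self_dual_and_net_in_arc_unique:
  assumes an: "and_net f" and sd: "self_dual f"
    and "has_arc f j i" "has_arc f k i"
  shows "j = k"
proof (rule ccontr)
  assume "j \<noteq> k"
  define x where "x l = (if l = j then neg_arc f j i else pos_arc f k i)" for l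
  have simple: "\<not> (pos_arc f l i \<and> neg_arc f l i)" for l
    using an unfolding and_net_def simple_graph_def by blast
  have "\<not> f x i"
    using \<open>has_arc f j i\<close> simple[of j] and_net_apply[OF an, of x i]
    unfolding has_arc_def x_def by auto
  moreover have "\<not> f (\<lambda>l. \<not> x l) i"
    using \<open>has_arc f k i\<close> \<open>j \<noteq> k\<close> simple[of k] and_net_apply[OF an, of "\<lambda>l. \<not> x l" i]
    unfolding has_arc_def x_def by auto
  ultimately show False
    using self_dual_apply[OF sd, of x i] by simp
qed

lemma surj_if_conjugate_parity_const:
  fixes f :: "('v::finite \<Rightarrow> bool) \<Rightarrow> ('v \<Rightarrow> bool)"
  assumes lit: "\<And>x i. f x i = (x (p i) = c i)"
    and par: "range (conjugate f) \<subseteq> {z. odd (weight z) = q}"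
  shows "surj p"
proof (rule ccontr)
  assume "\<not> surj p"
  then obtain j where j: "\<And>i. p i \<noteq> j" by (metis surj_def)
  \<comment> \<open>As \<open>j\<close> has no out-arc, flipping \<open>x\<^sub>j\<close> flips only the \<open>j\<close>-th coordinate of the conjugate.\<close>
  define e where "e k = (k = j)" for k
  define z where "z (k :: 'v) = False" for k
  have "conjugate f e = xorp (conjugate f z) e"
    by (auto simp: conjugate_def xorp_def lit e_def z_def j)
  moreover have "weight e = 1"
    by (simp add: e_def weight_def)
  ultimately have "odd (weight (conjugate f e)) \<noteq> odd (weight (conjugate f z))"
    by (simp add: odd_weight_xorp)
  with par show False by auto
qed

lemma self_dual_and_net_imp_literal_net:
  fixes f :: "('v::finite \<Rightarrow> bool) \<Rightarrow> ('v \<Rightarrow> bool)"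
  assumes an: "and_net f" and sd: "self_dual f"
    and par: "range (conjugate f) \<subseteq> {z. odd (weight z) = q}"
  obtains s b where "literal_net f s b"
proof -
  define p where "p i = (THE j. has_arc f j i)" for i
  have "has_arc f k i \<longleftrightarrow> k = p i" for k i
    unfolding p_def using self_dual_and_net_ex_in_arc[OF an sd, of i]
      self_dual_and_net_in_arc_unique[OF an sd] by (metis theI)
  then have pred: "f x i = (x (p i) = pos_arc f (p i) i)" for x i
    by (rule component_eq_literal_if_unique_in_arc)
  then have "surj p"
    by (rule surj_if_conjugate_parity_const[OF _ par])
  then have "bij p"
    by (simp add: bij_def finite_UNIV_surj_inj)
  then have "literal_net f (inv p) (\<lambda>j. pos_arc f j (inv p j))"
    unfolding literal_net_def using pred by (simp add: bij_imp_bij_inv bij_is_surj surj_f_inv_f)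
  then show ?thesis by (rule that)
qed

lemma literal_net_orbit_covers:
  fixes f :: "('v::finite \<Rightarrow> bool) \<Rightarrow> ('v \<Rightarrow> bool)"
  assumes lit: "literal_net f s b"
    and rg: "range (conjugate f) = {z. odd (weight z) = q}"
  shows "\<exists>n. (s ^^ n) i = j"
proof (rule ccontr)
  assume j: "\<nexists>n. (s ^^ n) i = j"
  define C where "C = range (\<lambda>n. (s ^^ n) i)"
  have "i \<in> C"
    unfolding C_def by (metis funpow_0 rangeI)
  have "j \<notin> C"
    unfolding C_def using j by blast
  have "s ` C = C"
    unfolding C_def using lit by (simp add: image_orbit_eq literal_net_def bij_def)
  have C_par: "odd (card {k\<in>C. y k}) \<longleftrightarrow> odd (card {k\<in>C. \<not> b k})"
    if "odd (weight y) = q" for y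
  proof -
    have "y \<in> range (conjugate f)"
      using that rg by simp
    then obtain x where "y = conjugate f x"
      by blast
    then show ?thesis
      using literal_net_odd_card_conjugate_on[OF lit finite \<open>s ` C = C\<close>] by simp
  qed
  define y :: "'v \<Rightarrow> bool" where "y = (if q then (\<lambda>_. False) else (\<lambda>k. k = i))"
  have "odd (weight y) \<noteq> q"
    by (simp add: y_def weight_single weight_def)
  then have "odd (card {k\<in>C. xorp y (\<lambda>k. k = l) k}) \<longleftrightarrow> odd (card {k\<in>C. \<not> b k})" for l
    by (intro C_par) (simp add: odd_weight_xorp weight_single)
  then have "odd (card {k\<in>C. y k \<noteq> (k = i)}) = odd (card {k\<in>C. y k \<noteq> (k = j)})"
    unfolding xorp_def by blast
  moreover have "{k\<in>C. k = i} = {i}" "{k\<in>C. k = j} = {}"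
    using \<open>i \<in> C\<close> \<open>j \<notin> C\<close> by auto
  then have "odd (card {k\<in>C. k = i})" "\<not> odd (card {k\<in>C. k = j})"
    by (simp_all only:) simp_all
  ultimately show False
    using odd_card_Collect_neq[OF finite, of C y "\<lambda>k. k = i"]
      odd_card_Collect_neq[OF finite, of C y "\<lambda>k. k = j"] by blast
qed

lemma hamiltonian_cycle_succ_parity_iff:
  fixes f :: "('v::finite \<Rightarrow> bool) \<Rightarrow> ('v \<Rightarrow> bool)"
  shows "(\<exists>s. hamiltonian_cycle_succ f s \<and> odd (card {j. neg_arc f j (s j)}) = q) \<longleftrightarrow>
    self_dual f \<and> and_net f \<and> range (conjugate f) = {z. odd (weight z) = q}"
proof
  assume "\<exists>s. hamiltonian_cycle_succ f s \<and> odd (card {j. neg_arc f j (s j)}) = q"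
  then show "self_dual f \<and> and_net f \<and> range (conjugate f) = {z. odd (weight z) = q}"
    using hamiltonian_cycle_succ_imp_self_dual_and_net by blast
next
  assume "self_dual f \<and> and_net f \<and> range (conjugate f) = {z. odd (weight z) = q}"
  then have sd: "self_dual f" and an: "and_net f"
    and rg: "range (conjugate f) = {z. odd (weight z) = q}"
    by simp_all
  obtain s b where lit: "literal_net f s b"
    by (rule self_dual_and_net_imp_literal_net[OF an sd equalityD1[OF rg]])
  have "hamiltonian_cycle_succ f s"
    unfolding hamiltonian_cycle_succ_def
    by (simp add: literal_net_simple_graph[OF lit] literal_net_has_arc_iff[OF lit]
        literal_net_orbit_covers[OF lit rg])
  moreover have "{j. neg_arc f j (s j)} = {j. \<not> b j}"
    using literal_net_neg_arc_iff[OF lit] by blast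
  moreover have "odd (card {j. \<not> b j}) = q"
  proof -
    have "conjugate f x \<in> range (conjugate f)" for x
      by simp
    then show ?thesis
      using literal_net_odd_weight_conjugate[OF lit] rg by simp
  qed
  ultimately show "\<exists>s. hamiltonian_cycle_succ f s \<and> odd (card {j. neg_arc f j (s j)}) = q"
    by auto
qed

theorem proposition6:
  fixes f :: "('v::finite \<Rightarrow> bool) \<Rightarrow> ('v \<Rightarrow> bool)"
  shows "(positive_circular f \<longleftrightarrow> even_self_dual f \<and> and_net f) \<and>
         (negative_circular f \<longleftrightarrow> odd_self_dual f \<and> and_net f)"
proof
  show "positive_circular f \<longleftrightarrow> even_self_dual f \<and> and_net f"
    using hamiltonian_cycle_succ_parity_iff[of f False]
    unfolding positive_circular_def even_self_dual_def even_net_def even_point_def by auto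
  show "negative_circular f \<longleftrightarrow> odd_self_dual f \<and> and_net f"
    using hamiltonian_cycle_succ_parity_iff[of f True]
    unfolding negative_circular_def odd_self_dual_def odd_net_def odd_point_def by auto
qed

end
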